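(* Suppose the stochastic variational inequality in extensive form has at least one solution, and let $\{(x_k,w_k)\}$ be an infinite sequence generated by the IPHA (the stopping condition never holds). Then $\{(x_k,w_k)\}$ converges to a pair $(x^*,w^* )$ which solves the SVI in extensive form, and $x^*$ is a solution of the basic SVI.
   Context: Multistage setting: $\Xi$ is a finite set of scenarios $\xi=(\xi_1,\dots,\xi_N)$ with probabilities $p(\xi)>0$; $n=n_1+\dots+n_N$. $\mathcal L_n$ is the space of functions $x:\Xi\to\mathbb R^n$, $x(\xi)=(x_1(\xi),\dots,x_N(\xi))$, $x_j(\xi)\in\mathbb R^{n_j}$, with inner product $\langle x,w\rangle=\sum_{\xi}p(\xi)\sum_{j}\langle x_j(\xi),w_j(\xi)\rangle$. $\mathcal N=\{x\in\mathcal L_n: x_j(\xi)\text{ does not depend on }\xi_j,\dots,\xi_N\}$, $\mathcal M=\mathcal N^\perp$, with orthogonal projections $P_{\mathcal N},P_{\mathcal M}$. For each $\xi$, $C(\xi)\subset\mathbb R^n$ is nonempty closed convex and $F(\cdot,\xi):\mathbb R^n\to\mathbb R^n$ is continuous monotone; $\mathcal C=\{x\in\mathcal L_n: x(\xi)\in C(\xi)\ \forall\xi\}$ and $\mathcal F(x)(\xi)=F(x(\xi),\xi)$. $r>0$ fixed. Basic SVI: find $x\in\mathcal C\cap\mathcal N$ with $-\mathcal F(x)\in N_{\mathcal C\cap\mathcal N}(x)$. SVI in extensive form: find $x\in\mathcal N$, $w\in\mathcal M$ with $-F(x(\xi),\xi)-w(\xi)\in N_{C(\xi)}(x(\xi))$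 for all $\xi\in\Xi$. IPHA: choose $x_0\in\mathcal N$, $w_0\in\mathcal M$, $\bar\sigma\in(0,1)$, $\theta\in(0,1)$. At iteration $k$: choose $\sigma_k\in[0,\bar\sigma)$, find $\hat x^k,\hat w^k\in\mathcal L_n$ with $r(x_k(\xi)-\hat x^k(\xi))-w_k(\xi)\in F(\hat w^k(\xi),\xi)+N_{C(\xi)}(\hat w^k(\xi))$ for all $\xi$, $\delta^k=\hat w^k-\hat x^k$, and $\|\delta^k\|^2\le\sigma_k^2(\|a_k\|^2+\|b_k\|^2)$, where $a_k=x_k-P_{\mathcal N}(\hat x^k)+P_{\mathcal M}(\hat w^k)$, $b_k=x_k-P_{\mathcal N}(\hat w^k)+P_{\mathcal M}(\hat x^k)$. If $b_k=0$ stop; otherwise choose $\tau_k\in[1-\theta,1+\theta]$, set $\alpha_k=\langle a_k,b_k\rangle/\|a_k\|^2$, $x_{k+1}=x_k-\tau_k\alpha_k(x_k-P_{\mathcal N}(\hat x^k))$, $w_{k+1}=w_k+\tau_k\alpha_k rP_{\mathcal M}(\hat w^k)$. *)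

theory Defs
  imports "HOL-Analysis.Analysis"
begin

text \<open>Scenarios are functions xi :: nat => 's, with xi t the t-th component (t = 1..N).
  A decision x(xi) is a vector in real^'n; the coordinates of real^'n are partitioned
  into the stage blocks by blk :: 'n => nat (values in 1..N), so that x_j(xi) consists
  of the coordinates i with blk i = j.\<close>

definition normal_cone :: "(real^'n) set \<Rightarrow> real^'n \<Rightarrow> (real^'n) set" where
  "normal_cone S u = {v. u \<in> S \<and> (\<forall>y\<in>S. v \<bullet> (y - u) \<le> 0)}"

definition ipL :: "('s set) \<Rightarrow> ('s \<Rightarrow> real) \<Rightarrow> ('s \<Rightarrow> real^'n) \<Rightarrow> ('s \<Rightarrow> real^'n) \<Rightarrow> real" where
  "ipL Xi p x w = (\<Sum>\<xi>\<in>Xi. p \<xi> * (x \<xi> \<bullet> w \<xi>))"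

definition Ln :: "'s set \<Rightarrow> ('s \<Rightarrow> real^'n) set" where
  "Ln Xi = {x. \<forall>\<xi>. \<xi> \<notin> Xi \<longrightarrow> x \<xi> = 0}"

definition NA :: "(nat \<Rightarrow> 'c) set \<Rightarrow> ('n \<Rightarrow> nat) \<Rightarrow> ((nat \<Rightarrow> 'c) \<Rightarrow> real^'n) set" where
  "NA Xi blk = {x \<in> Ln Xi. \<forall>\<xi>\<in>Xi. \<forall>\<xi>'\<in>Xi. \<forall>i.
       (\<forall>t\<in>{1..<blk i}. \<xi> t = \<xi>' t) \<longrightarrow> x \<xi> $ i = x \<xi>' $ i}"

definition MA :: "(nat \<Rightarrow> 'c) set \<Rightarrow> ((nat \<Rightarrow> 'c) \<Rightarrow> real) \<Rightarrow> ('n \<Rightarrow> nat) \<Rightarrow> ((nat \<Rightarrow> 'c) \<Rightarrow> real^'n) set" where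
  "MA Xi p blk = {w \<in> Ln Xi. \<forall>x\<in>NA Xi blk. ipL Xi p x w = 0}"

definition normal_coneL :: "'s set \<Rightarrow> ('s \<Rightarrow> real) \<Rightarrow> ('s \<Rightarrow> real^'n) set \<Rightarrow> ('s \<Rightarrow> real^'n) \<Rightarrow> ('s \<Rightarrow> real^'n) set" where
  "normal_coneL Xi p S u = {v. u \<in> S \<and> (\<forall>y\<in>S. ipL Xi p v (\<lambda>\<xi>. y \<xi> - u \<xi>) \<le> 0)}"

definition oprojL :: "'s set \<Rightarrow> ('s \<Rightarrow> real) \<Rightarrow> ('s \<Rightarrow> real^'n) set \<Rightarrow> ('s \<Rightarrow> real^'n) \<Rightarrow> ('s \<Rightarrow> real^'n)" where
  "oprojL Xi p S x = (THE y. y \<in> S \<and> (\<forall>z\<in>S. ipL Xi p (\<lambda>\<xi>. x \<xi> - y \<xi>) z = 0))"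

definition CC :: "'s set \<Rightarrow> ('s \<Rightarrow> (real^'n) set) \<Rightarrow> ('s \<Rightarrow> real^'n) set" where
  "CC Xi C = {x \<in> Ln Xi. \<forall>\<xi>\<in>Xi. x \<xi> \<in> C \<xi>}"

end

theory Submission
  imports Defs
begin

text \<open>For every solution (x*, w*) of the extensive form, the r-weighted distance
  D k = |x k - x*|^2 + |w k - w*|^2 / r^2 satisfies the Fejer inequality
  D (k+1) <= D k - kappa (|a k|^2 + |b k|^2) with kappa > 0.  Monotonicity of F and of the
  normal cones, together with the orthogonality of N and M, bounds <a k, b k> above by the inner
  product of (x k - x*, w k - w*) with the search direction; the inexactness criterion bounds it
  below by (1 - sigmabar^2)/2 (|a k|^2 + |b k|^2); and the relaxed step tau k * alpha k turns
  the two bounds into a fixed decrease.  Hence a k, b k -> 0, which forces wh k - x k -> 0 and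
  x k - xh k -> 0, and the iterates stay bounded.  A cluster point solves the extensive form,
  because the graph of a normal cone is closed and F is continuous, and Fejer monotonicity with
  respect to this cluster point makes the whole sequence converge to it.  Finally, w* is
  orthogonal to N, so the scenario-wise inclusions tested against y - x* with y in C and N give
  the basic SVI.\<close>

lemma normal_cone_monotone:
  assumes "n1 \<in> normal_cone S u" "n2 \<in> normal_cone S v"
  shows "0 \<le> (n1 - n2) \<bullet> (u - v)"
proof -
  have "n1 \<bullet> (v - u) \<le> 0" "n2 \<bullet> (u - v) \<le> 0"
    using assms unfolding normal_cone_def by auto
  then show ?thesis
    by (simp add: inner_diff_left inner_diff_right)
qed

lemma normal_cone_closed_graph:
  assumes "closed S" "\<And>j. n j \<in> normal_cone S (u j)" "u \<longlonglongrightarrow> u0" "n \<longlonglongrightarrow> n0"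
  shows "n0 \<in> normal_cone S u0"
proof -
  have "u0 \<in> S"
    using assms(1-3) closed_sequentially unfolding normal_cone_def by blast
  moreover have "n0 \<bullet> (y - u0) \<le> 0" if "y \<in> S" for y
  proof (rule LIMSEQ_le_const2)
    show "(\<lambda>j. n j \<bullet> (y - u j)) \<longlonglongrightarrow> n0 \<bullet> (y - u0)"
      by (intro tendsto_inner tendsto_diff tendsto_const assms(3,4))
    show "\<exists>N. \<forall>j\<ge>N. n j \<bullet> (y - u j) \<le> 0"
      using assms(2) that unfolding normal_cone_def by auto
  qed
  ultimately show ?thesis
    unfolding normal_cone_def by blast
qed

text \<open>The step t = tau phi / A relaxes the minimiser phi / A of t^2 A - 2 t phi.\<close>

lemma relaxed_step_gain:
  fixes A B c \<phi> G \<tau> \<theta> :: real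
  assumes "0 < A" "0 \<le> B" "0 < c" "c * (A + B) \<le> \<phi>" "\<phi> \<le> G"
    and "1 - \<theta> \<le> \<tau>" "\<tau> \<le> 1 + \<theta>" "\<theta> < 1"
  shows "(1 - \<theta>\<^sup>2) * c\<^sup>2 * (A + B) \<le> 2 * (\<tau> * (\<phi> / A)) * G - (\<tau> * (\<phi> / A))\<^sup>2 * A"
proof -
  define t where "t = \<tau> * (\<phi> / A)"
  have "0 < \<phi>"
    using assms(1-4) by (smt (verit) mult_pos_pos)
  have "0 \<le> \<theta>" "0 < \<tau>"
    using assms(6-8) by linarith+
  then have "0 \<le> t" "0 < 1 - \<theta>\<^sup>2"
    using \<open>0 < \<phi>\<close> assms(1,8) unfolding t_def by (simp_all add: power_less_one_iff)
  have \<tau>_gain: "1 - \<theta>\<^sup>2 \<le> 2 * \<tau> - \<tau>\<^sup>2"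
  proof -
    have "(1 - \<tau>)\<^sup>2 \<le> \<theta>\<^sup>2"
      using assms(6,7) by (simp add: abs_le_iff power2_le_iff_abs_le)
    then show ?thesis
      by (simp add: power2_eq_square algebra_simps)
  qed
  have "c\<^sup>2 * (A + B) \<le> c\<^sup>2 * (A + B)\<^sup>2 / A"
    using assms(1-3) by (simp add: pos_le_divide_eq power2_eq_square mult_left_mono)
  also have "\<dots> \<le> \<phi>\<^sup>2 / A"
    using assms(1-4) by (intro divide_right_mono) (auto simp: power_mult_distrib[symmetric] intro: power_mono)
  finally have "(1 - \<theta>\<^sup>2) * (c\<^sup>2 * (A + B)) \<le> (2 * \<tau> - \<tau>\<^sup>2) * (\<phi>\<^sup>2 / A)"
    using \<tau>_gain \<open>0 < 1 - \<theta>\<^sup>2\<close> assms(1,2) by (intro mult_mono) auto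
  also have "\<dots> = 2 * t * \<phi> - t\<^sup>2 * A"
    using assms(1) unfolding t_def by (simp add: field_simps power2_eq_square)
  also have "\<dots> \<le> 2 * t * G - t\<^sup>2 * A"
    using \<open>0 \<le> t\<close> assms(5) by (simp add: mult_left_mono)
  finally show ?thesis
    unfolding t_def by (simp add: mult.assoc)
qed

lemma decseq_tendsto_0_if_subseq:
  fixes D :: "nat \<Rightarrow> real"
  assumes "decseq D" "\<And>k. 0 \<le> D k" "strict_mono h" "(D \<circ> h) \<longlonglongrightarrow> 0"
  shows "D \<longlonglongrightarrow> 0"
proof -
  obtain L where "D \<longlonglongrightarrow> L"
    by (rule decseq_convergent[OF assms(1), of 0]) (use assms(2) in auto)
  moreover have "L = 0"
    using LIMSEQ_unique[OF LIMSEQ_subseq_LIMSEQ[OF \<open>D \<longlonglongrightarrow> L\<close> assms(3)] assms(4)] .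
  ultimately show ?thesis
    by simp
qed

lemma common_convergent_subseq:
  fixes f :: "'a \<Rightarrow> nat \<Rightarrow> 'b::heine_borel"
  assumes "finite S" "\<forall>\<xi>\<in>S. bounded (range (f \<xi>))"
  shows "\<exists>h. strict_mono h \<and> (\<forall>\<xi>\<in>S. \<exists>l. (f \<xi> \<circ> h) \<longlonglongrightarrow> l)"
  using assms
proof (induction S rule: finite_induct)
  case empty
  show ?case
    using strict_mono_id by blast
next
  case (insert a S)
  then obtain h where h: "strict_mono h" "\<forall>\<xi>\<in>S. \<exists>l. (f \<xi> \<circ> h) \<longlonglongrightarrow> l"
    by blast
  have "bounded (range (f a \<circ> h))"
    by (rule bounded_subset[of "range (f a)"]) (use insert.prems in auto)
  then obtain l g where g: "strict_mono g" "(f a \<circ> h \<circ> g) \<longlonglongrightarrow> l"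
    using bounded_imp_convergent_subsequence by blast
  have "\<exists>l. (f \<xi> \<circ> (h \<circ> g)) \<longlonglongrightarrow> l" if "\<xi> \<in> insert a S" for \<xi>
  proof (cases "\<xi> = a")
    case True
    show ?thesis
      unfolding True o_assoc using g(2) by (rule exI)
  next
    case False
    with that have "\<xi> \<in> S"
      by simp
    then obtain l' where "(f \<xi> \<circ> h) \<longlonglongrightarrow> l'"
      using h(2) by blast
    from LIMSEQ_subseq_LIMSEQ[OF this g(1)] show ?thesis
      unfolding o_assoc by (rule exI)
  qed
  moreover have "strict_mono (h \<circ> g)"
    using h(1) g(1) by (rule strict_mono_o)
  ultimately show ?case
    by blast
qed

section \<open>The weighted inner product on scenario functions\<close>

lemma ipL_commute: "ipL X p u v = ipL X p v u"
  unfolding ipL_def by (simp add: inner_commute)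

lemma ipL_add_left: "ipL X p (\<lambda>\<xi>. u \<xi> + v \<xi>) z = ipL X p u z + ipL X p v z"
  unfolding ipL_def by (simp add: inner_add_left distrib_left sum.distrib)

lemma ipL_diff_left: "ipL X p (\<lambda>\<xi>. u \<xi> - v \<xi>) z = ipL X p u z - ipL X p v z"
  unfolding ipL_def by (simp add: inner_diff_left right_diff_distrib sum_subtractf)

lemma ipL_scaleR_left: "ipL X p (\<lambda>\<xi>. c *\<^sub>R u \<xi>) z = c * ipL X p u z"
  unfolding ipL_def by (simp add: sum_distrib_left algebra_simps)

lemma ipL_add_right: "ipL X p z (\<lambda>\<xi>. u \<xi> + v \<xi>) = ipL X p z u + ipL X p z v"
  unfolding ipL_def by (simp add: inner_add_right distrib_left sum.distrib)

lemma ipL_diff_right: "ipL X p z (\<lambda>\<xi>. u \<xi> - v \<xi>) = ipL X p z u - ipL X p z v"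
  unfolding ipL_def by (simp add: inner_diff_right right_diff_distrib sum_subtractf)

lemma ipL_scaleR_right: "ipL X p z (\<lambda>\<xi>. c *\<^sub>R u \<xi>) = c * ipL X p z u"
  unfolding ipL_def by (simp add: sum_distrib_left algebra_simps)

lemmas ipL_linear = ipL_add_left ipL_diff_left ipL_scaleR_left
  ipL_add_right ipL_diff_right ipL_scaleR_right

lemma sqnorm_diff:
  "ipL X p (\<lambda>\<xi>. u \<xi> - v \<xi>) (\<lambda>\<xi>. u \<xi> - v \<xi>) = ipL X p u u - 2 * ipL X p u v + ipL X p v v"
  by (simp add: ipL_diff_left ipL_diff_right ipL_commute[of X p v u])

lemma sqnorm_diff_scaleR:
  "ipL X p (\<lambda>\<xi>. u \<xi> - t *\<^sub>R v \<xi>) (\<lambda>\<xi>. u \<xi> - t *\<^sub>R v \<xi>)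
     = ipL X p u u - 2 * t * ipL X p u v + t\<^sup>2 * ipL X p v v"
  by (simp add: ipL_linear ipL_commute[of X p v u] algebra_simps power2_eq_square)

lemma sqnorm_add_scaleR:
  "ipL X p (\<lambda>\<xi>. u \<xi> + t *\<^sub>R v \<xi>) (\<lambda>\<xi>. u \<xi> + t *\<^sub>R v \<xi>)
     = ipL X p u u + 2 * t * ipL X p u v + t\<^sup>2 * ipL X p v v"
  by (simp add: ipL_linear ipL_commute[of X p v u] algebra_simps power2_eq_square)

lemma ipL_tendsto:
  assumes "\<forall>\<xi>\<in>X. (\<lambda>k. u k \<xi>) \<longlonglongrightarrow> u0 \<xi>" "\<forall>\<xi>\<in>X. (\<lambda>k. v k \<xi>) \<longlonglongrightarrow> v0 \<xi>"
  shows "(\<lambda>k. ipL X p (u k) (v k)) \<longlonglongrightarrow> ipL X p u0 v0"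
  unfolding ipL_def using assms by (intro tendsto_sum tendsto_mult tendsto_const tendsto_inner) auto

locale scenario_space =
  fixes Xi :: "'s set" and p :: "'s \<Rightarrow> real"
  assumes finite_Xi: "finite Xi" and p_pos: "\<forall>\<xi>\<in>Xi. 0 < p \<xi>"
begin

abbreviation sqnorm :: "('s \<Rightarrow> real^'n) \<Rightarrow> real" where
  "sqnorm u \<equiv> ipL Xi p u u"

lemma sqnorm_nonneg: "0 \<le> sqnorm u"
  unfolding ipL_def using p_pos by (auto intro!: sum_nonneg)

lemma sqnorm_ge_point: "\<xi> \<in> Xi \<Longrightarrow> p \<xi> * (norm (u \<xi>))\<^sup>2 \<le> sqnorm u"
  unfolding ipL_def power2_norm_eq_inner using finite_Xi p_pos
  by (intro member_le_sum) auto

lemma sqnorm_eq_0D: "sqnorm u = 0 \<Longrightarrow> \<xi> \<in> Xi \<Longrightarrow> u \<xi> = 0"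
  using sqnorm_ge_point[of \<xi> u] bspec[OF p_pos, of \<xi>] by (simp add: mult_le_0_iff)

lemma sqnorm_pos:
  assumes "\<xi> \<in> Xi" "u \<xi> \<noteq> 0"
  shows "0 < sqnorm u"
proof -
  have "sqnorm u \<noteq> 0"
    using sqnorm_eq_0D assms by metis
  then show ?thesis
    using sqnorm_nonneg[of u] by linarith
qed

lemma sqnorm_tendsto_0D:
  assumes "(\<lambda>k. sqnorm (u k)) \<longlonglongrightarrow> 0" "\<xi> \<in> Xi"
  shows "(\<lambda>k. u k \<xi>) \<longlonglongrightarrow> 0"
proof -
  have "(\<lambda>k. (norm (u k \<xi>))\<^sup>2) \<longlonglongrightarrow> 0"
  proof (rule Lim_null_comparison)
    show "(\<lambda>k. sqnorm (u k) / p \<xi>) \<longlonglongrightarrow> 0"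
      using tendsto_divide_zero[OF assms(1)] .
    have "(norm (u k \<xi>))\<^sup>2 \<le> sqnorm (u k) / p \<xi>" for k
      using sqnorm_ge_point[OF assms(2)] bspec[OF p_pos assms(2)]
      by (simp add: pos_le_divide_eq mult.commute)
    then show "\<forall>\<^sub>F k in sequentially. norm ((norm (u k \<xi>))\<^sup>2) \<le> sqnorm (u k) / p \<xi>"
      by (simp add: always_eventually)
  qed
  then have "(\<lambda>k. sqrt ((norm (u k \<xi>))\<^sup>2)) \<longlonglongrightarrow> sqrt 0"
    by (intro tendsto_real_sqrt)
  then show ?thesis
    by (simp add: tendsto_norm_zero_iff)
qed

lemma sqnorm_tendsto_0:
  assumes "\<forall>\<xi>\<in>Xi. (\<lambda>k. u k \<xi>) \<longlonglongrightarrow> 0"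
  shows "(\<lambda>k. sqnorm (u k)) \<longlonglongrightarrow> 0"
  using ipL_tendsto[OF assms assms, of p] by (simp add: ipL_def)

lemma sqnorm_bounded_imp_bounded:
  assumes "\<And>k. sqnorm (\<lambda>\<xi>. u k \<xi> - c \<xi>) \<le> K" "\<xi> \<in> Xi"
  shows "bounded (range (\<lambda>k. u k \<xi>))"
proof (rule boundedI)
  fix y
  assume "y \<in> range (\<lambda>k. u k \<xi>)"
  then obtain k where y: "y = u k \<xi>"
    by auto
  have "p \<xi> * (norm (u k \<xi> - c \<xi>))\<^sup>2 \<le> K"
    using sqnorm_ge_point[OF assms(2), of "\<lambda>\<xi>. u k \<xi> - c \<xi>"] assms(1)[of k] by simp
  then have "norm (u k \<xi> - c \<xi>) \<le> sqrt (K / p \<xi>)"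
    using p_pos assms(2) by (simp add: real_le_rsqrt pos_le_divide_eq mult.commute)
  then show "norm y \<le> sqrt (K / p \<xi>) + norm (c \<xi>)"
    unfolding y using norm_triangle_sub[of "u k \<xi>" "c \<xi>"] by linarith
qed

lemma oprojL_eqI:
  assumes "S \<subseteq> Ln Xi" "\<And>u v. u \<in> S \<Longrightarrow> v \<in> S \<Longrightarrow> (\<lambda>\<xi>. u \<xi> - v \<xi>) \<in> S"
    and "y \<in> S" "\<forall>z\<in>S. ipL Xi p (\<lambda>\<xi>. x \<xi> - y \<xi>) z = 0"
  shows "oprojL Xi p S x = y"
  unfolding oprojL_def
proof (rule the_equality)
  show "y \<in> S \<and> (\<forall>z\<in>S. ipL Xi p (\<lambda>\<xi>. x \<xi> - y \<xi>) z = 0)"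
    using assms(3,4) by blast
next
  fix y'
  assume y': "y' \<in> S \<and> (\<forall>z\<in>S. ipL Xi p (\<lambda>\<xi>. x \<xi> - y' \<xi>) z = 0)"
  let ?d = "\<lambda>\<xi>. y' \<xi> - y \<xi>"
  have "?d \<in> S"
    using assms(2,3) y' by blast
  then have "ipL Xi p (\<lambda>\<xi>. x \<xi> - y \<xi>) ?d - ipL Xi p (\<lambda>\<xi>. x \<xi> - y' \<xi>) ?d = 0"
    using assms(4) y' by simp
  then have "sqnorm ?d = 0"
    by (simp add: ipL_diff_left)
  moreover have "y \<in> Ln Xi" "y' \<in> Ln Xi"
    using assms(1,3) y' by auto
  ultimately have "y' \<xi> = y \<xi>" for \<xi>
    using sqnorm_eq_0D[of ?d \<xi>] unfolding Ln_def by (cases "\<xi> \<in> Xi") auto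
  then show "y' = y"
    by blast
qed

end

section \<open>Nonanticipative functions and their orthogonal complement\<close>

lemma NA_subset_Ln: "NA Xi blk \<subseteq> Ln Xi"
  unfolding NA_def by auto

lemma MA_subset_Ln: "MA Xi p blk \<subseteq> Ln Xi"
  unfolding MA_def by auto

lemma NA_I:
  assumes "x \<in> Ln Xi"
    and "\<And>\<xi> \<xi>' i. \<xi> \<in> Xi \<Longrightarrow> \<xi>' \<in> Xi \<Longrightarrow> \<forall>t\<in>{1..<blk i}. \<xi> t = \<xi>' t \<Longrightarrow> x \<xi> $ i = x \<xi>' $ i"
  shows "x \<in> NA Xi blk"
  unfolding NA_def using assms by blast

lemma NA_D:
  "x \<in> NA Xi blk \<Longrightarrow> \<xi> \<in> Xi \<Longrightarrow> \<xi>' \<in> Xi \<Longrightarrow> \<forall>t\<in>{1..<blk i}. \<xi> t = \<xi>' t \<Longrightarrow> x \<xi> $ i = x \<xi>' $ i"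
  unfolding NA_def by blast

lemma NA_diff:
  assumes "u \<in> NA Xi blk" "v \<in> NA Xi blk"
  shows "(\<lambda>\<xi>. u \<xi> - v \<xi>) \<in> NA Xi blk"
proof (rule NA_I)
  show "(\<lambda>\<xi>. u \<xi> - v \<xi>) \<in> Ln Xi"
    using subsetD[OF NA_subset_Ln assms(1)] subsetD[OF NA_subset_Ln assms(2)] by (simp add: Ln_def)
  fix \<xi> \<xi>' i
  assume hist: "\<xi> \<in> Xi" "\<xi>' \<in> Xi" "\<forall>t\<in>{1..<blk i}. \<xi> t = \<xi>' t"
  show "(u \<xi> - v \<xi>) $ i = (u \<xi>' - v \<xi>') $ i"
    using NA_D[OF assms(1) hist] NA_D[OF assms(2) hist] by simp
qed

lemma NA_scaleR:
  assumes "u \<in> NA Xi blk"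
  shows "(\<lambda>\<xi>. c *\<^sub>R u \<xi>) \<in> NA Xi blk"
proof (rule NA_I)
  show "(\<lambda>\<xi>. c *\<^sub>R u \<xi>) \<in> Ln Xi"
    using subsetD[OF NA_subset_Ln assms] by (simp add: Ln_def)
  fix \<xi> \<xi>' i
  assume hist: "\<xi> \<in> Xi" "\<xi>' \<in> Xi" "\<forall>t\<in>{1..<blk i}. \<xi> t = \<xi>' t"
  show "(c *\<^sub>R u \<xi>) $ i = (c *\<^sub>R u \<xi>') $ i"
    using NA_D[OF assms(1) hist] by simp
qed

lemma MA_diff: "u \<in> MA Xi p blk \<Longrightarrow> v \<in> MA Xi p blk \<Longrightarrow> (\<lambda>\<xi>. u \<xi> - v \<xi>) \<in> MA Xi p blk"
  unfolding MA_def Ln_def by (auto simp: ipL_diff_right)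

lemma MA_add: "u \<in> MA Xi p blk \<Longrightarrow> v \<in> MA Xi p blk \<Longrightarrow> (\<lambda>\<xi>. u \<xi> + v \<xi>) \<in> MA Xi p blk"
  unfolding MA_def Ln_def by (auto simp: ipL_add_right)

lemma MA_scaleR: "u \<in> MA Xi p blk \<Longrightarrow> (\<lambda>\<xi>. c *\<^sub>R u \<xi>) \<in> MA Xi p blk"
  unfolding MA_def Ln_def by (auto simp: ipL_scaleR_right)

lemma NA_MA_orthogonal: "u \<in> NA Xi blk \<Longrightarrow> v \<in> MA Xi p blk \<Longrightarrow> ipL Xi p u v = 0"
  unfolding MA_def by auto

lemma MA_NA_orthogonal: "v \<in> MA Xi p blk \<Longrightarrow> u \<in> NA Xi blk \<Longrightarrow> ipL Xi p v u = 0"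
  using NA_MA_orthogonal ipL_commute by metis

lemma ipL_NA_MA_sum:
  assumes "u \<in> NA Xi blk" "u' \<in> NA Xi blk" "v \<in> MA Xi p blk" "v' \<in> MA Xi p blk"
  shows "ipL Xi p (\<lambda>\<xi>. u \<xi> + v \<xi>) (\<lambda>\<xi>. u' \<xi> + v' \<xi>) = ipL Xi p u u' + ipL Xi p v v'"
  using NA_MA_orthogonal[OF assms(1,4)] MA_NA_orthogonal[OF assms(3,2)]
  by (simp add: ipL_add_left ipL_add_right)

lemma NA_closed:
  assumes "\<And>k. u k \<in> NA Xi blk" "l \<in> Ln Xi" "\<forall>\<xi>\<in>Xi. (\<lambda>k. u k \<xi>) \<longlonglongrightarrow> l \<xi>"
  shows "l \<in> NA Xi blk"
proof (rule NA_I[OF assms(2)])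
  fix \<xi> \<xi>' i
  assume hist: "\<xi> \<in> Xi" "\<xi>' \<in> Xi" "\<forall>t\<in>{1..<blk i}. \<xi> t = \<xi>' t"
  have "(\<lambda>k. u k \<xi> $ i) \<longlonglongrightarrow> l \<xi> $ i" "(\<lambda>k. u k \<xi>' $ i) \<longlonglongrightarrow> l \<xi>' $ i"
    using assms(3) hist(1,2) by (auto intro: tendsto_vec_nth)
  moreover have "(\<lambda>k. u k \<xi> $ i) = (\<lambda>k. u k \<xi>' $ i)"
    using NA_D[OF assms(1) hist] by simp
  ultimately show "l \<xi> $ i = l \<xi>' $ i"
    using LIMSEQ_unique by metis
qed

lemma MA_closed:
  assumes "\<And>k. u k \<in> MA Xi p blk" "l \<in> Ln Xi" "\<forall>\<xi>\<in>Xi. (\<lambda>k. u k \<xi>) \<longlonglongrightarrow> l \<xi>"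
  shows "l \<in> MA Xi p blk"
  unfolding MA_def
proof (intro CollectI conjI ballI assms(2))
  fix z
  assume "z \<in> NA Xi blk"
  have "(\<lambda>k. ipL Xi p z (u k)) \<longlonglongrightarrow> ipL Xi p z l"
    using assms(3) by (intro ipL_tendsto) auto
  moreover have "(\<lambda>k. ipL Xi p z (u k)) = (\<lambda>k. 0)"
    using NA_MA_orthogonal[OF \<open>z \<in> NA Xi blk\<close> assms(1)] by simp
  ultimately show "ipL Xi p z l = 0"
    using LIMSEQ_unique tendsto_const by metis
qed

section \<open>The projections as conditional expectations\<close>

definition cond_expect :: "'s set \<Rightarrow> ('s \<Rightarrow> real) \<Rightarrow> ('s \<Rightarrow> 'h) \<Rightarrow> ('s \<Rightarrow> real) \<Rightarrow> 's \<Rightarrow> real" where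
  "cond_expect X p h g \<xi> =
     (\<Sum>\<eta>\<in>{\<eta>\<in>X. h \<eta> = h \<xi>}. p \<eta> * g \<eta>) / (\<Sum>\<eta>\<in>{\<eta>\<in>X. h \<eta> = h \<xi>}. p \<eta>)"

lemma cond_expect_cong: "h \<xi> = h \<xi>' \<Longrightarrow> cond_expect X p h g \<xi> = cond_expect X p h g \<xi>'"
  unfolding cond_expect_def by simp

text \<open>The tower property E[E[g | h] z] = E[g z] for z a function of h.\<close>

lemma sum_cond_expect_mult:
  assumes "finite X" "\<forall>\<xi>\<in>X. 0 < p \<xi>" and z: "\<forall>\<xi>\<in>X. \<forall>\<eta>\<in>X. h \<eta> = h \<xi> \<longrightarrow> z \<eta> = z \<xi>"
  shows "(\<Sum>\<xi>\<in>X. p \<xi> * cond_expect X p h g \<xi> * z \<xi>) = (\<Sum>\<xi>\<in>X. p \<xi> * g \<xi> * z \<xi>)"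
proof -
  have fiber: "(\<Sum>\<xi>\<in>{\<xi>\<in>X. h \<xi> = v}. p \<xi> * cond_expect X p h g \<xi> * z \<xi>)
      = (\<Sum>\<xi>\<in>{\<xi>\<in>X. h \<xi> = v}. p \<xi> * g \<xi> * z \<xi>)" if v: "v \<in> h ` X" for v
  proof -
    obtain \<xi>0 where \<xi>0: "\<xi>0 \<in> X" "h \<xi>0 = v"
      using v by blast
    let ?\<Phi> = "{\<xi>\<in>X. h \<xi> = v}"
    have "0 < (\<Sum>\<xi>\<in>?\<Phi>. p \<xi>)"
    proof (rule sum_pos2)
      show "finite ?\<Phi>" "\<xi>0 \<in> ?\<Phi>" "0 < p \<xi>0"
        using assms(1,2) \<xi>0 by auto
      show "0 \<le> p \<xi>" if "\<xi> \<in> ?\<Phi>" for \<xi>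
        using assms(2) that by auto
    qed
    define E where "E = (\<Sum>\<eta>\<in>?\<Phi>. p \<eta> * g \<eta>) / (\<Sum>\<eta>\<in>?\<Phi>. p \<eta>)"
    have "(\<Sum>\<xi>\<in>?\<Phi>. p \<xi> * cond_expect X p h g \<xi> * z \<xi>) = (\<Sum>\<xi>\<in>?\<Phi>. p \<xi> * (E * z \<xi>0))"
    proof (rule sum.cong)
      fix \<xi>
      assume "\<xi> \<in> ?\<Phi>"
      then show "p \<xi> * cond_expect X p h g \<xi> * z \<xi> = p \<xi> * (E * z \<xi>0)"
        using \<xi>0 z[rule_format, of \<xi>0 \<xi>] unfolding cond_expect_def E_def by simp
    qed simp
    also have "\<dots> = (\<Sum>\<xi>\<in>?\<Phi>. p \<xi>) * E * z \<xi>0"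
      by (simp add: sum_distrib_right mult.assoc)
    also have "\<dots> = (\<Sum>\<xi>\<in>?\<Phi>. p \<xi> * g \<xi>) * z \<xi>0"
      using \<open>0 < (\<Sum>\<xi>\<in>?\<Phi>. p \<xi>)\<close> unfolding E_def by simp
    also have "\<dots> = (\<Sum>\<xi>\<in>?\<Phi>. p \<xi> * g \<xi> * z \<xi>)"
      unfolding sum_distrib_right
    proof (rule sum.cong)
      fix \<xi>
      assume "\<xi> \<in> ?\<Phi>"
      then show "p \<xi> * g \<xi> * z \<xi>0 = p \<xi> * g \<xi> * z \<xi>"
        using \<xi>0 z[rule_format, of \<xi>0 \<xi>] by simp
    qed simp
    finally show ?thesis .
  qed
  show ?thesis
    using fiber by (simp add: sum.image_gen[OF assms(1), of _ h])
qed

lemma restrict_eq_restrict_iff: "restrict f A = restrict g A \<longleftrightarrow> (\<forall>x\<in>A. f x = g x)"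
  by (metis restrict_apply' restrict_ext)

lemma ipL_coordinatewise: "ipL X p u z = (\<Sum>i\<in>UNIV. \<Sum>\<xi>\<in>X. p \<xi> * (u \<xi> $ i) * (z \<xi> $ i))"
  unfolding ipL_def inner_vec_def
  by (simp add: sum_distrib_left mult.assoc sum.swap[where A = X])

locale multistage = scenario_space Xi p for Xi :: "(nat \<Rightarrow> 'c) set" and p +
  fixes blk :: "'n::finite \<Rightarrow> nat"
begin

abbreviation PN :: "((nat \<Rightarrow> 'c) \<Rightarrow> real^'n) \<Rightarrow> (nat \<Rightarrow> 'c) \<Rightarrow> real^'n" where
  "PN \<equiv> oprojL Xi p (NA Xi blk)"

abbreviation PM :: "((nat \<Rightarrow> 'c) \<Rightarrow> real^'n) \<Rightarrow> (nat \<Rightarrow> 'c) \<Rightarrow> real^'n" where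
  "PM \<equiv> oprojL Xi p (MA Xi p blk)"

text \<open>Coordinate i of P_N y is the conditional expectation of y_i given the history
  xi_1, ..., xi_(blk i - 1) on which that coordinate may depend.\<close>

definition nonant_proj :: "((nat \<Rightarrow> 'c) \<Rightarrow> real^'n) \<Rightarrow> (nat \<Rightarrow> 'c) \<Rightarrow> real^'n" where
  "nonant_proj y \<xi> = (if \<xi> \<in> Xi
     then \<chi> i. cond_expect Xi p (\<lambda>\<eta>. restrict \<eta> {1..<blk i}) (\<lambda>\<eta>. y \<eta> $ i) \<xi> else 0)"

lemma nonant_proj_NA: "nonant_proj y \<in> NA Xi blk"
proof (rule NA_I)
  show "nonant_proj y \<in> Ln Xi"
    unfolding Ln_def nonant_proj_def by simp
  fix \<xi> \<xi>' i
  assume "\<xi> \<in> Xi" "\<xi>' \<in> Xi" "\<forall>t\<in>{1..<blk i}. \<xi> t = \<xi>' t"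
  moreover from this have "restrict \<xi> {1..<blk i} = restrict \<xi>' {1..<blk i}"
    by (simp add: restrict_eq_restrict_iff)
  ultimately show "nonant_proj y \<xi> $ i = nonant_proj y \<xi>' $ i"
    unfolding nonant_proj_def using cond_expect_cong[of "\<lambda>\<eta>. restrict \<eta> {1..<blk i}" \<xi> \<xi>'] by simp
qed

lemma nonant_proj_orthogonal:
  assumes "z \<in> NA Xi blk"
  shows "ipL Xi p (nonant_proj y) z = ipL Xi p y z"
proof -
  have "(\<Sum>\<xi>\<in>Xi. p \<xi> * (nonant_proj y \<xi> $ i) * (z \<xi> $ i)) = (\<Sum>\<xi>\<in>Xi. p \<xi> * (y \<xi> $ i) * (z \<xi> $ i))"
    for i
  proof -
    let ?h = "\<lambda>\<eta>. restrict \<eta> {1..<blk i}"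
    have "(\<Sum>\<xi>\<in>Xi. p \<xi> * (nonant_proj y \<xi> $ i) * (z \<xi> $ i))
        = (\<Sum>\<xi>\<in>Xi. p \<xi> * cond_expect Xi p ?h (\<lambda>\<eta>. y \<eta> $ i) \<xi> * (z \<xi> $ i))"
      unfolding nonant_proj_def by simp
    also have "\<dots> = (\<Sum>\<xi>\<in>Xi. p \<xi> * (y \<xi> $ i) * (z \<xi> $ i))"
    proof (rule sum_cond_expect_mult[OF finite_Xi p_pos])
      show "\<forall>\<xi>\<in>Xi. \<forall>\<eta>\<in>Xi. ?h \<eta> = ?h \<xi> \<longrightarrow> z \<eta> $ i = z \<xi> $ i"
        by (intro ballI impI NA_D[OF assms]) (simp_all add: restrict_eq_restrict_iff)
    qed
    finally show ?thesis .
  qed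
  then show ?thesis
    unfolding ipL_coordinatewise by simp
qed

lemma nonant_residual_orthogonal:
  "z \<in> NA Xi blk \<Longrightarrow> ipL Xi p (\<lambda>\<xi>. y \<xi> - nonant_proj y \<xi>) z = 0"
  unfolding ipL_diff_left by (simp add: nonant_proj_orthogonal)

lemma PN_eq_nonant_proj: "PN y = nonant_proj y"
  using nonant_residual_orthogonal by (intro oprojL_eqI[OF NA_subset_Ln NA_diff nonant_proj_NA]) auto

lemma nonant_residual_MA:
  assumes "y \<in> Ln Xi"
  shows "(\<lambda>\<xi>. y \<xi> - nonant_proj y \<xi>) \<in> MA Xi p blk"
  unfolding MA_def
proof (intro CollectI conjI ballI)
  show "(\<lambda>\<xi>. y \<xi> - nonant_proj y \<xi>) \<in> Ln Xi"
    using assms subsetD[OF NA_subset_Ln nonant_proj_NA] by (simp add: Ln_def)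
  fix x
  assume "x \<in> NA Xi blk"
  then show "ipL Xi p x (\<lambda>\<xi>. y \<xi> - nonant_proj y \<xi>) = 0"
    by (simp add: ipL_diff_right ipL_commute[of Xi p x] nonant_proj_orthogonal)
qed

lemma PM_eq:
  assumes "y \<in> Ln Xi"
  shows "PM y = (\<lambda>\<xi>. y \<xi> - nonant_proj y \<xi>)"
proof (rule oprojL_eqI[OF MA_subset_Ln MA_diff nonant_residual_MA[OF assms]])
  have "(\<lambda>\<xi>. y \<xi> - (y \<xi> - nonant_proj y \<xi>)) = nonant_proj y"
    by simp
  then show "\<forall>z\<in>MA Xi p blk. ipL Xi p (\<lambda>\<xi>. y \<xi> - (y \<xi> - nonant_proj y \<xi>)) z = 0"
    using NA_MA_orthogonal[OF nonant_proj_NA] by simp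
qed

lemma PN_NA: "PN y \<in> NA Xi blk"
  unfolding PN_eq_nonant_proj by (rule nonant_proj_NA)

lemma PM_MA: "y \<in> Ln Xi \<Longrightarrow> PM y \<in> MA Xi p blk"
  unfolding PM_eq by (rule nonant_residual_MA)

lemma PN_add_PM: "y \<in> Ln Xi \<Longrightarrow> PN y \<xi> + PM y \<xi> = y \<xi>"
  unfolding PN_eq_nonant_proj PM_eq by simp

lemma diff_eq_PN_diff_add_PM: "y \<in> Ln Xi \<Longrightarrow> y \<xi> - c = (PN y \<xi> - c) + PM y \<xi>"
  using PN_add_PM[of y \<xi>] by (simp add: algebra_simps)

lemma diff_eq_diff_PN_diff_PM: "y \<in> Ln Xi \<Longrightarrow> c - y \<xi> = (c - PN y \<xi>) - PM y \<xi>"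
  using PN_add_PM[of y \<xi>] by (simp add: algebra_simps)

lemma normal_coneL_of_extensive:
  assumes "xs \<in> NA Xi blk" "ws \<in> MA Xi p blk"
    and "\<forall>\<xi>\<in>Xi. g \<xi> - ws \<xi> \<in> normal_cone (C \<xi>) (xs \<xi>)"
  shows "g \<in> normal_coneL Xi p (CC Xi C \<inter> NA Xi blk) xs"
proof -
  have "xs \<in> CC Xi C"
    using assms(3) subsetD[OF NA_subset_Ln assms(1)] unfolding CC_def normal_cone_def by simp
  moreover have "ipL Xi p g (\<lambda>\<xi>. y \<xi> - xs \<xi>) \<le> 0" if y: "y \<in> CC Xi C \<inter> NA Xi blk" for y
  proof -
    have "ipL Xi p ws (\<lambda>\<xi>. y \<xi> - xs \<xi>) = 0"
      using y by (intro MA_NA_orthogonal[OF assms(2)] NA_diff[OF _ assms(1)]) simp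
    moreover have "ipL Xi p (\<lambda>\<xi>. g \<xi> - ws \<xi>) (\<lambda>\<xi>. y \<xi> - xs \<xi>) \<le> 0"
      unfolding ipL_def
    proof (rule sum_nonpos)
      fix \<xi>
      assume "\<xi> \<in> Xi"
      then have "(g \<xi> - ws \<xi>) \<bullet> (y \<xi> - xs \<xi>) \<le> 0"
        using assms(3) y unfolding normal_cone_def CC_def by simp
      then show "p \<xi> * ((g \<xi> - ws \<xi>) \<bullet> (y \<xi> - xs \<xi>)) \<le> 0"
        by (rule mult_nonneg_nonpos[OF less_imp_le[OF bspec[OF p_pos \<open>\<xi> \<in> Xi\<close>]]])
    qed
    ultimately show ?thesis
      by (simp add: ipL_diff_left)
  qed
  ultimately show ?thesis
    unfolding normal_coneL_def using assms(1) by blast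
qed

end

section \<open>Convergence of the IPHA\<close>

locale ipha = multistage Xi p blk
  for Xi :: "(nat \<Rightarrow> 'c) set" and p and blk :: "'n::finite \<Rightarrow> nat" +
  fixes C :: "(nat \<Rightarrow> 'c) \<Rightarrow> (real^'n) set"
    and F :: "real^'n \<Rightarrow> (nat \<Rightarrow> 'c) \<Rightarrow> real^'n"
    and r :: real
    and x w xh wh :: "nat \<Rightarrow> (nat \<Rightarrow> 'c) \<Rightarrow> real^'n"
    and \<sigma>bar \<theta> :: real and \<sigma> \<tau> :: "nat \<Rightarrow> real"
  assumes C_closed: "\<forall>\<xi>\<in>Xi. closed (C \<xi>)"
    and F_cont: "\<forall>\<xi>\<in>Xi. continuous_on UNIV (\<lambda>u. F u \<xi>)"
    and F_mono: "\<forall>\<xi>\<in>Xi. \<forall>u v. 0 \<le> (F u \<xi> - F v \<xi>) \<bullet> (u - v)"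
    and r_pos: "0 < r"
    and x0_NA: "x 0 \<in> NA Xi blk" and w0_MA: "w 0 \<in> MA Xi p blk"
    and \<sigma>bar: "\<sigma>bar < 1" and \<theta>: "0 < \<theta>" "\<theta> < 1"
    and \<sigma>: "\<forall>k. 0 \<le> \<sigma> k \<and> \<sigma> k < \<sigma>bar"
    and \<tau>: "\<forall>k. 1 - \<theta> \<le> \<tau> k \<and> \<tau> k \<le> 1 + \<theta>"
    and hat_Ln: "\<forall>k. xh k \<in> Ln Xi \<and> wh k \<in> Ln Xi"
    and hat_incl: "\<forall>k. \<forall>\<xi>\<in>Xi. r *\<^sub>R (x k \<xi> - xh k \<xi>) - w k \<xi> - F (wh k \<xi>) \<xi>
                     \<in> normal_cone (C \<xi>) (wh k \<xi>)"
    and inexact: "\<forall>k. sqnorm (\<lambda>\<xi>. wh k \<xi> - xh k \<xi>)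
                   \<le> (\<sigma> k)\<^sup>2 * (sqnorm (\<lambda>\<xi>. x k \<xi> - PN (xh k) \<xi> + PM (wh k) \<xi>)
                                + sqnorm (\<lambda>\<xi>. x k \<xi> - PN (wh k) \<xi> + PM (xh k) \<xi>))"
    and nostop: "\<forall>k. \<exists>\<xi>\<in>Xi. x k \<xi> - PN (wh k) \<xi> + PM (xh k) \<xi> \<noteq> 0"
    and upd_x: "\<forall>k. x (Suc k) = (\<lambda>\<xi>. x k \<xi> - (\<tau> k *
                  (ipL Xi p (\<lambda>\<xi>. x k \<xi> - PN (xh k) \<xi> + PM (wh k) \<xi>)
                            (\<lambda>\<xi>. x k \<xi> - PN (wh k) \<xi> + PM (xh k) \<xi>)
                   / sqnorm (\<lambda>\<xi>. x k \<xi> - PN (xh k) \<xi> + PM (wh k) \<xi>)))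
                  *\<^sub>R (x k \<xi> - PN (xh k) \<xi>))"
    and upd_w: "\<forall>k. w (Suc k) = (\<lambda>\<xi>. w k \<xi> + (\<tau> k *
                  (ipL Xi p (\<lambda>\<xi>. x k \<xi> - PN (xh k) \<xi> + PM (wh k) \<xi>)
                            (\<lambda>\<xi>. x k \<xi> - PN (wh k) \<xi> + PM (xh k) \<xi>)
                   / sqnorm (\<lambda>\<xi>. x k \<xi> - PN (xh k) \<xi> + PM (wh k) \<xi>)) * r)
                  *\<^sub>R PM (wh k) \<xi>)"
begin

definition a :: "nat \<Rightarrow> (nat \<Rightarrow> 'c) \<Rightarrow> real^'n" where
  "a k = (\<lambda>\<xi>. x k \<xi> - PN (xh k) \<xi> + PM (wh k) \<xi>)"

definition b :: "nat \<Rightarrow> (nat \<Rightarrow> 'c) \<Rightarrow> real^'n" where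
  "b k = (\<lambda>\<xi>. x k \<xi> - PN (wh k) \<xi> + PM (xh k) \<xi>)"

definition step :: "nat \<Rightarrow> real" where
  "step k = \<tau> k * (ipL Xi p (a k) (b k) / sqnorm (a k))"

definition ext_solution :: "((nat \<Rightarrow> 'c) \<Rightarrow> real^'n) \<Rightarrow> ((nat \<Rightarrow> 'c) \<Rightarrow> real^'n) \<Rightarrow> bool" where
  "ext_solution xs ws \<longleftrightarrow> xs \<in> NA Xi blk \<and> ws \<in> MA Xi p blk
     \<and> (\<forall>\<xi>\<in>Xi. - F (xs \<xi>) \<xi> - ws \<xi> \<in> normal_cone (C \<xi>) (xs \<xi>))"

definition sol_dist :: "((nat \<Rightarrow> 'c) \<Rightarrow> real^'n) \<Rightarrow> ((nat \<Rightarrow> 'c) \<Rightarrow> real^'n) \<Rightarrow> nat \<Rightarrow> real" where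
  "sol_dist xs ws k = sqnorm (\<lambda>\<xi>. x k \<xi> - xs \<xi>) + sqnorm (\<lambda>\<xi>. w k \<xi> - ws \<xi>) / r\<^sup>2"

text \<open>The inner product of (x k - xs, w k - ws) with the search direction
  (x k - P_N (xh k), - r P_M (wh k)), in the metric weighting the second component by 1 / r^2.\<close>

definition dir_inner :: "((nat \<Rightarrow> 'c) \<Rightarrow> real^'n) \<Rightarrow> ((nat \<Rightarrow> 'c) \<Rightarrow> real^'n) \<Rightarrow> nat \<Rightarrow> real" where
  "dir_inner xs ws k = ipL Xi p (\<lambda>\<xi>. x k \<xi> - xs \<xi>) (\<lambda>\<xi>. x k \<xi> - PN (xh k) \<xi>)
     - ipL Xi p (\<lambda>\<xi>. w k \<xi> - ws \<xi>) (PM (wh k)) / r"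

definition \<kappa> :: real where
  "\<kappa> = (1 - \<theta>\<^sup>2) * ((1 - \<sigma>bar\<^sup>2) / 2)\<^sup>2"

lemma x_Suc: "x (Suc k) = (\<lambda>\<xi>. x k \<xi> - step k *\<^sub>R (x k \<xi> - PN (xh k) \<xi>))"
  using upd_x unfolding step_def a_def b_def by simp

lemma w_Suc: "w (Suc k) = (\<lambda>\<xi>. w k \<xi> + (step k * r) *\<^sub>R PM (wh k) \<xi>)"
  using upd_w unfolding step_def a_def b_def by simp

lemma xh_Ln: "xh k \<in> Ln Xi" and wh_Ln: "wh k \<in> Ln Xi"
  using hat_Ln by auto

lemma x_NA: "x k \<in> NA Xi blk"
proof (induction k)
  case (Suc k)
  then show ?case
    unfolding x_Suc by (intro NA_diff NA_scaleR PN_NA Suc)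
qed (rule x0_NA)

lemma w_MA: "w k \<in> MA Xi p blk"
proof (induction k)
  case (Suc k)
  then show ?case
    unfolding w_Suc by (intro MA_add MA_scaleR PM_MA wh_Ln Suc)
qed (rule w0_MA)

lemma x_minus_PN_NA: "(\<lambda>\<xi>. x k \<xi> - PN y \<xi>) \<in> NA Xi blk"
  by (rule NA_diff[OF x_NA PN_NA])

lemma sqnorm_a: "sqnorm (a k) = sqnorm (\<lambda>\<xi>. x k \<xi> - PN (xh k) \<xi>) + sqnorm (PM (wh k))"
  unfolding a_def by (intro ipL_NA_MA_sum[where blk = blk] x_minus_PN_NA PM_MA wh_Ln)

lemma sqnorm_b: "sqnorm (b k) = sqnorm (\<lambda>\<xi>. x k \<xi> - PN (wh k) \<xi>) + sqnorm (PM (xh k))"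
  unfolding b_def by (intro ipL_NA_MA_sum[where blk = blk] x_minus_PN_NA PM_MA xh_Ln)

lemma ipL_a_b: "ipL Xi p (a k) (b k)
  = ipL Xi p (\<lambda>\<xi>. x k \<xi> - PN (xh k) \<xi>) (\<lambda>\<xi>. x k \<xi> - PN (wh k) \<xi>) + ipL Xi p (PM (wh k)) (PM (xh k))"
  unfolding a_def b_def by (intro ipL_NA_MA_sum[where blk = blk] x_minus_PN_NA PM_MA xh_Ln wh_Ln)

lemma a_minus_b: "a k \<xi> - b k \<xi> = wh k \<xi> - xh k \<xi>"
proof -
  have "wh k \<xi> - xh k \<xi> = (PN (wh k) \<xi> + PM (wh k) \<xi>) - (PN (xh k) \<xi> + PM (xh k) \<xi>)"
    by (simp only: PN_add_PM[OF wh_Ln] PN_add_PM[OF xh_Ln])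
  also have "\<dots> = a k \<xi> - b k \<xi>"
    unfolding a_def b_def by (simp add: algebra_simps)
  finally show ?thesis ..
qed

lemma ipL_a_b_lower_bound:
  "(1 - \<sigma>bar\<^sup>2) / 2 * (sqnorm (a k) + sqnorm (b k)) \<le> ipL Xi p (a k) (b k)"
proof -
  have "sqnorm (\<lambda>\<xi>. a k \<xi> - b k \<xi>) \<le> (\<sigma> k)\<^sup>2 * (sqnorm (a k) + sqnorm (b k))"
    using inexact unfolding a_minus_b unfolding a_def b_def by blast
  also have "\<dots> \<le> \<sigma>bar\<^sup>2 * (sqnorm (a k) + sqnorm (b k))"
  proof (rule mult_right_mono)
    have "0 \<le> \<sigma> k" "\<sigma> k < \<sigma>bar"
      using \<sigma> by auto
    then show "(\<sigma> k)\<^sup>2 \<le> \<sigma>bar\<^sup>2"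
      by (intro power_mono) auto
    show "0 \<le> sqnorm (a k) + sqnorm (b k)"
      using sqnorm_nonneg[of "a k"] sqnorm_nonneg[of "b k"] by linarith
  qed
  finally have "sqnorm (a k) - 2 * ipL Xi p (a k) (b k) + sqnorm (b k) \<le> \<sigma>bar\<^sup>2 * (sqnorm (a k) + sqnorm (b k))"
    by (simp only: sqnorm_diff)
  then show ?thesis
    by (simp add: field_simps)
qed

lemma sqnorm_b_pos: "0 < sqnorm (b k)"
proof -
  obtain \<xi> where "\<xi> \<in> Xi" "b k \<xi> \<noteq> 0"
    using nostop unfolding b_def by blast
  then show ?thesis
    by (rule sqnorm_pos)
qed

lemma \<sigma>bar_margin_pos: "0 < (1 - \<sigma>bar\<^sup>2) / 2"
proof -
  have "0 \<le> \<sigma>bar"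
    using \<sigma> by (meson less_imp_le order_trans)
  then show ?thesis
    using \<sigma>bar by (simp add: power_less_one_iff)
qed

lemma \<kappa>_pos: "0 < \<kappa>"
  unfolding \<kappa>_def using \<sigma>bar_margin_pos \<theta> by (simp add: power_less_one_iff)

lemma ipL_a_b_pos: "0 < ipL Xi p (a k) (b k)"
proof -
  have "0 < (1 - \<sigma>bar\<^sup>2) / 2 * (sqnorm (a k) + sqnorm (b k))"
    using \<sigma>bar_margin_pos sqnorm_b_pos[of k] sqnorm_nonneg[of "a k"] by simp
  then show ?thesis
    using ipL_a_b_lower_bound[of k] by linarith
qed

lemma sqnorm_a_pos: "0 < sqnorm (a k)"
proof (rule ccontr)
  assume "\<not> 0 < sqnorm (a k)"
  then have "sqnorm (a k) = 0"
    using sqnorm_nonneg[of "a k"] by linarith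
  then have "\<forall>\<xi>\<in>Xi. a k \<xi> = 0"
    using sqnorm_eq_0D by blast
  then have "ipL Xi p (a k) (b k) = 0"
    unfolding ipL_def by simp
  then show False
    using ipL_a_b_pos[of k] by simp
qed

lemma monotone_inclusion:
  assumes "ext_solution xs ws"
  shows "0 \<le> r * ipL Xi p (\<lambda>\<xi>. x k \<xi> - xh k \<xi>) (\<lambda>\<xi>. wh k \<xi> - xs \<xi>)
              - ipL Xi p (\<lambda>\<xi>. w k \<xi> - ws \<xi>) (\<lambda>\<xi>. wh k \<xi> - xs \<xi>)"
proof -
  have "0 \<le> ipL Xi p (\<lambda>\<xi>. r *\<^sub>R (x k \<xi> - xh k \<xi>) - (w k \<xi> - ws \<xi>)) (\<lambda>\<xi>. wh k \<xi> - xs \<xi>)"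
    unfolding ipL_def
  proof (rule sum_nonneg)
    fix \<xi>
    assume "\<xi> \<in> Xi"
    let ?X = "r *\<^sub>R (x k \<xi> - xh k \<xi>) - (w k \<xi> - ws \<xi>)"
      and ?Y = "F (wh k \<xi>) \<xi> - F (xs \<xi>) \<xi>" and ?d = "wh k \<xi> - xs \<xi>"
    have "0 \<le> ((r *\<^sub>R (x k \<xi> - xh k \<xi>) - w k \<xi> - F (wh k \<xi>) \<xi>) - (- F (xs \<xi>) \<xi> - ws \<xi>)) \<bullet> ?d"
      using hat_incl assms \<open>\<xi> \<in> Xi\<close> unfolding ext_solution_def by (intro normal_cone_monotone) auto
    also have "(r *\<^sub>R (x k \<xi> - xh k \<xi>) - w k \<xi> - F (wh k \<xi>) \<xi>) - (- F (xs \<xi>) \<xi> - ws \<xi>) = ?X - ?Y"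
      by (simp add: algebra_simps)
    also have "(?X - ?Y) \<bullet> ?d = ?X \<bullet> ?d - ?Y \<bullet> ?d"
      by (rule inner_diff_left)
    finally have "0 \<le> ?X \<bullet> ?d - ?Y \<bullet> ?d" .
    moreover have "0 \<le> ?Y \<bullet> ?d"
      using F_mono \<open>\<xi> \<in> Xi\<close> by blast
    ultimately have "0 \<le> ?X \<bullet> ?d"
      by linarith
    then show "0 \<le> p \<xi> * (?X \<bullet> ?d)"
      by (rule mult_nonneg_nonneg[OF less_imp_le[OF bspec[OF p_pos \<open>\<xi> \<in> Xi\<close>]]])
  qed
  then show ?thesis
    by (simp add: ipL_diff_left ipL_scaleR_left)
qed

lemma ipL_w_residual:
  assumes "ext_solution xs ws"
  shows "ipL Xi p (\<lambda>\<xi>. w k \<xi> - ws \<xi>) (\<lambda>\<xi>. wh k \<xi> - xs \<xi>) = ipL Xi p (\<lambda>\<xi>. w k \<xi> - ws \<xi>) (PM (wh k))"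
proof -
  have "(\<lambda>\<xi>. w k \<xi> - ws \<xi>) \<in> MA Xi p blk" "(\<lambda>\<xi>. PN (wh k) \<xi> - xs \<xi>) \<in> NA Xi blk"
    using assms unfolding ext_solution_def by (auto intro: MA_diff w_MA NA_diff PN_NA)
  then show ?thesis
    by (simp add: diff_eq_PN_diff_add_PM[OF wh_Ln] ipL_add_right MA_NA_orthogonal)
qed

lemma ipL_x_residual:
  assumes "xs \<in> NA Xi blk"
  shows "ipL Xi p (\<lambda>\<xi>. x k \<xi> - xh k \<xi>) (\<lambda>\<xi>. wh k \<xi> - xs \<xi>)
    = ipL Xi p (\<lambda>\<xi>. x k \<xi> - xs \<xi>) (\<lambda>\<xi>. x k \<xi> - PN (xh k) \<xi>) - ipL Xi p (a k) (b k)"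
proof -
  let ?dx = "\<lambda>\<xi>. x k \<xi> - PN (xh k) \<xi>" and ?db = "\<lambda>\<xi>. x k \<xi> - PN (wh k) \<xi>"
    and ?e = "\<lambda>\<xi>. PN (wh k) \<xi> - xs \<xi>"
  have e_NA: "?e \<in> NA Xi blk"
    by (rule NA_diff[OF PN_NA assms])
  have "ipL Xi p (\<lambda>\<xi>. x k \<xi> - xh k \<xi>) (\<lambda>\<xi>. wh k \<xi> - xs \<xi>)
      = ipL Xi p (\<lambda>\<xi>. ?dx \<xi> - PM (xh k) \<xi>) (\<lambda>\<xi>. ?e \<xi> + PM (wh k) \<xi>)"
    by (simp only: diff_eq_diff_PN_diff_PM[OF xh_Ln] diff_eq_PN_diff_add_PM[OF wh_Ln])
  also have "\<dots> = ipL Xi p ?dx ?e - ipL Xi p (PM (xh k)) (PM (wh k))"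
    using NA_MA_orthogonal[OF x_minus_PN_NA PM_MA[OF wh_Ln]] MA_NA_orthogonal[OF PM_MA[OF xh_Ln] e_NA]
    by (simp add: ipL_linear)
  also have "ipL Xi p ?dx ?e = ipL Xi p ?dx (\<lambda>\<xi>. x k \<xi> - xs \<xi>) - ipL Xi p ?dx ?db"
  proof -
    have "?e = (\<lambda>\<xi>. (x k \<xi> - xs \<xi>) - ?db \<xi>)"
      by (simp add: algebra_simps)
    then show ?thesis
      by (simp add: ipL_diff_right)
  qed
  finally show ?thesis
    by (simp add: ipL_a_b ipL_commute[of Xi p ?dx "\<lambda>\<xi>. x k \<xi> - xs \<xi>"] ipL_commute[of Xi p "PM (xh k)"])
qed

lemma ipL_a_b_le_dir_inner:
  assumes "ext_solution xs ws"
  shows "ipL Xi p (a k) (b k) \<le> dir_inner xs ws k"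
proof -
  have "xs \<in> NA Xi blk"
    using assms unfolding ext_solution_def by blast
  then show ?thesis
    using monotone_inclusion[OF assms, of k] r_pos
    unfolding dir_inner_def ipL_x_residual[OF \<open>xs \<in> NA Xi blk\<close>] ipL_w_residual[OF assms]
    by (simp add: field_simps)
qed

lemma sol_dist_Suc:
  "sol_dist xs ws (Suc k) = sol_dist xs ws k - 2 * step k * dir_inner xs ws k + (step k)\<^sup>2 * sqnorm (a k)"
proof -
  have x: "(\<lambda>\<xi>. x (Suc k) \<xi> - xs \<xi>) = (\<lambda>\<xi>. (x k \<xi> - xs \<xi>) - step k *\<^sub>R (x k \<xi> - PN (xh k) \<xi>))"
    unfolding x_Suc by (simp add: algebra_simps)
  have w: "(\<lambda>\<xi>. w (Suc k) \<xi> - ws \<xi>) = (\<lambda>\<xi>. (w k \<xi> - ws \<xi>) + (step k * r) *\<^sub>R PM (wh k) \<xi>)"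
    unfolding w_Suc by (simp add: algebra_simps)
  show ?thesis
    unfolding sol_dist_def dir_inner_def x w sqnorm_diff_scaleR sqnorm_add_scaleR sqnorm_a
    using r_pos by (simp add: field_simps power2_eq_square)
qed

lemma sol_dist_descent:
  assumes "ext_solution xs ws"
  shows "sol_dist xs ws (Suc k) \<le> sol_dist xs ws k - \<kappa> * (sqnorm (a k) + sqnorm (b k))"
proof -
  have "1 - \<theta> \<le> \<tau> k" "\<tau> k \<le> 1 + \<theta>"
    using \<tau> by auto
  from relaxed_step_gain[OF sqnorm_a_pos[of k] sqnorm_nonneg[of "b k"] \<sigma>bar_margin_pos
      ipL_a_b_lower_bound[of k] ipL_a_b_le_dir_inner[OF assms, of k] this \<theta>(2)]
  show ?thesis
    unfolding sol_dist_Suc \<kappa>_def step_def by linarith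
qed

lemma sol_dist_nonneg: "0 \<le> sol_dist xs ws k"
  unfolding sol_dist_def using r_pos by (intro add_nonneg_nonneg divide_nonneg_pos sqnorm_nonneg) simp

lemma sol_dist_decseq:
  assumes "ext_solution xs ws"
  shows "decseq (sol_dist xs ws)"
proof (rule decseq_SucI)
  fix k
  have "0 \<le> \<kappa> * (sqnorm (a k) + sqnorm (b k))"
    using \<kappa>_pos sqnorm_nonneg[of "a k"] sqnorm_nonneg[of "b k"] by simp
  then show "sol_dist xs ws (Suc k) \<le> sol_dist xs ws k"
    using sol_dist_descent[OF assms, of k] by linarith
qed

lemma residuals_tendsto_0:
  assumes "ext_solution xs ws"
  shows "(\<lambda>k. sqnorm (a k) + sqnorm (b k)) \<longlonglongrightarrow> 0"
proof (rule Lim_null_comparison)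
  let ?D = "sol_dist xs ws"
  have "\<forall>k. 0 \<le> ?D k"
    using sol_dist_nonneg by blast
  then obtain L where "?D \<longlonglongrightarrow> L" "\<forall>k. L \<le> ?D k"
    by (rule decseq_convergent[OF sol_dist_decseq[OF assms]])
  then have "(\<lambda>k. ?D k - ?D (Suc k)) \<longlonglongrightarrow> L - L"
    using LIMSEQ_Suc by (intro tendsto_diff) auto
  then show "(\<lambda>k. (?D k - ?D (Suc k)) / \<kappa>) \<longlonglongrightarrow> 0"
    using tendsto_divide_zero by force
  have "norm (sqnorm (a k) + sqnorm (b k)) \<le> (?D k - ?D (Suc k)) / \<kappa>" for k
    using sol_dist_descent[OF assms, of k] \<kappa>_pos sqnorm_nonneg[of "a k"] sqnorm_nonneg[of "b k"]
    by (simp add: pos_le_divide_eq mult.commute)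
  then show "\<forall>\<^sub>F k in sequentially. norm (sqnorm (a k) + sqnorm (b k)) \<le> (?D k - ?D (Suc k)) / \<kappa>"
    by (simp add: always_eventually)
qed

lemma hat_minus_x_tendsto_0:
  assumes "ext_solution xs ws" "\<xi> \<in> Xi"
  shows "(\<lambda>k. wh k \<xi> - x k \<xi>) \<longlonglongrightarrow> 0" "(\<lambda>k. x k \<xi> - xh k \<xi>) \<longlonglongrightarrow> 0"
proof -
  have small: "(\<lambda>k. u k \<xi>) \<longlonglongrightarrow> 0" if "\<And>k. sqnorm (u k) \<le> sqnorm (a k) + sqnorm (b k)" for u
  proof (rule sqnorm_tendsto_0D[OF _ assms(2)])
    show "(\<lambda>k. sqnorm (u k)) \<longlonglongrightarrow> 0"
    proof (rule Lim_null_comparison[OF _ residuals_tendsto_0[OF assms(1)]])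
      show "\<forall>\<^sub>F k in sequentially. norm (sqnorm (u k)) \<le> sqnorm (a k) + sqnorm (b k)"
        using that by (simp add: sqnorm_nonneg always_eventually)
    qed
  qed
  have parts: "sqnorm (\<lambda>\<xi>. x k \<xi> - PN (xh k) \<xi>) \<le> sqnorm (a k) + sqnorm (b k)"
    "sqnorm (PM (wh k)) \<le> sqnorm (a k) + sqnorm (b k)"
    "sqnorm (\<lambda>\<xi>. x k \<xi> - PN (wh k) \<xi>) \<le> sqnorm (a k) + sqnorm (b k)"
    "sqnorm (PM (xh k)) \<le> sqnorm (a k) + sqnorm (b k)" for k
    using sqnorm_a[of k] sqnorm_b[of k]
      sqnorm_nonneg[of "\<lambda>\<xi>. x k \<xi> - PN (xh k) \<xi>"] sqnorm_nonneg[of "PM (wh k)"]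
      sqnorm_nonneg[of "\<lambda>\<xi>. x k \<xi> - PN (wh k) \<xi>"] sqnorm_nonneg[of "PM (xh k)"]
    by linarith+
  have "(\<lambda>k. PM (wh k) \<xi> - (x k \<xi> - PN (wh k) \<xi>)) \<longlonglongrightarrow> 0 - 0"
    by (intro tendsto_diff small parts)
  then show "(\<lambda>k. wh k \<xi> - x k \<xi>) \<longlonglongrightarrow> 0"
    by (simp add: diff_eq_PN_diff_add_PM[OF wh_Ln] algebra_simps)
  have "(\<lambda>k. (x k \<xi> - PN (xh k) \<xi>) - PM (xh k) \<xi>) \<longlonglongrightarrow> 0 - 0"
    by (intro tendsto_diff small parts)
  then show "(\<lambda>k. x k \<xi> - xh k \<xi>) \<longlonglongrightarrow> 0"
    by (simp add: diff_eq_diff_PN_diff_PM[OF xh_Ln])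
qed

lemma sqnorm_le_sol_dist:
  "sqnorm (\<lambda>\<xi>. x k \<xi> - xs \<xi>) \<le> sol_dist xs ws k"
  "sqnorm (\<lambda>\<xi>. w k \<xi> - ws \<xi>) \<le> r\<^sup>2 * sol_dist xs ws k"
  using sqnorm_nonneg[of "\<lambda>\<xi>. x k \<xi> - xs \<xi>"] sqnorm_nonneg[of "\<lambda>\<xi>. w k \<xi> - ws \<xi>"] r_pos
  unfolding sol_dist_def by (simp_all add: field_simps)

lemma iterates_bounded:
  assumes "ext_solution xs ws" "\<xi> \<in> Xi"
  shows "bounded (range (\<lambda>k. (x k \<xi>, w k \<xi>)))"
proof -
  have D: "sol_dist xs ws k \<le> sol_dist xs ws 0" for k
    using sol_dist_decseq[OF assms(1)] by (simp add: decseq_def)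
  have "bounded (range (\<lambda>k. x k \<xi>))"
    by (rule sqnorm_bounded_imp_bounded[OF order_trans[OF sqnorm_le_sol_dist(1) D] assms(2)])
  moreover have "r\<^sup>2 * sol_dist xs ws k \<le> r\<^sup>2 * sol_dist xs ws 0" for k
    using D by (simp add: mult_left_mono)
  then have "bounded (range (\<lambda>k. w k \<xi>))"
    by (rule sqnorm_bounded_imp_bounded[OF order_trans[OF sqnorm_le_sol_dist(2)] assms(2)])
  ultimately show ?thesis
    by (rule bounded_subset[OF bounded_Times]) auto
qed

lemma sol_dist_tendsto_0D:
  assumes "sol_dist xs ws \<longlonglongrightarrow> 0" "\<xi> \<in> Xi"
  shows "(\<lambda>k. x k \<xi>) \<longlonglongrightarrow> xs \<xi>" "(\<lambda>k. w k \<xi>) \<longlonglongrightarrow> ws \<xi>"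
proof -
  have "(\<lambda>k. sqnorm (\<lambda>\<xi>. x k \<xi> - xs \<xi>)) \<longlonglongrightarrow> 0"
    by (rule Lim_null_comparison[OF _ assms(1)]) (simp add: sqnorm_nonneg sqnorm_le_sol_dist(1) always_eventually)
  from sqnorm_tendsto_0D[OF this assms(2)] show "(\<lambda>k. x k \<xi>) \<longlonglongrightarrow> xs \<xi>"
    by (simp add: LIM_zero_cancel)
  have "(\<lambda>k. r\<^sup>2 * sol_dist xs ws k) \<longlonglongrightarrow> 0"
    using tendsto_mult_right_zero[OF assms(1)] .
  then have "(\<lambda>k. sqnorm (\<lambda>\<xi>. w k \<xi> - ws \<xi>)) \<longlonglongrightarrow> 0"
    by (rule Lim_null_comparison[rotated]) (simp add: sqnorm_nonneg sqnorm_le_sol_dist(2) always_eventually)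
  from sqnorm_tendsto_0D[OF this assms(2)] show "(\<lambda>k. w k \<xi>) \<longlonglongrightarrow> ws \<xi>"
    by (simp add: LIM_zero_cancel)
qed

lemma cluster_point_ext_solution:
  assumes "ext_solution xs ws" "strict_mono h" "xb \<in> Ln Xi" "wb \<in> Ln Xi"
    and x_lim: "\<forall>\<xi>\<in>Xi. (\<lambda>j. x (h j) \<xi>) \<longlonglongrightarrow> xb \<xi>"
    and w_lim: "\<forall>\<xi>\<in>Xi. (\<lambda>j. w (h j) \<xi>) \<longlonglongrightarrow> wb \<xi>"
  shows "ext_solution xb wb"
  unfolding ext_solution_def
proof (intro conjI ballI)
  show "xb \<in> NA Xi blk"
    by (rule NA_closed[OF x_NA assms(3) x_lim])
  show "wb \<in> MA Xi p blk"
    by (rule MA_closed[OF w_MA assms(4) w_lim])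
  fix \<xi>
  assume "\<xi> \<in> Xi"
  have subseq: "(\<lambda>j. f (h j)) \<longlonglongrightarrow> 0" if "f \<longlonglongrightarrow> 0" for f :: "nat \<Rightarrow> real^'n"
    using LIMSEQ_subseq_LIMSEQ[OF that assms(2)] by (simp add: o_def)
  have wh_lim: "(\<lambda>j. wh (h j) \<xi>) \<longlonglongrightarrow> xb \<xi>"
    using tendsto_add[OF subseq[OF hat_minus_x_tendsto_0(1)[OF assms(1) \<open>\<xi> \<in> Xi\<close>]] x_lim[rule_format, OF \<open>\<xi> \<in> Xi\<close>]]
    by simp
  have "(\<lambda>j. F (wh (h j) \<xi>) \<xi>) \<longlonglongrightarrow> F (xb \<xi>) \<xi>"
    using F_cont \<open>\<xi> \<in> Xi\<close> by (intro continuous_on_tendsto_compose[OF _ wh_lim]) auto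
  then have "(\<lambda>j. r *\<^sub>R (x (h j) \<xi> - xh (h j) \<xi>) - w (h j) \<xi> - F (wh (h j) \<xi>) \<xi>)
      \<longlonglongrightarrow> r *\<^sub>R 0 - wb \<xi> - F (xb \<xi>) \<xi>"
    using subseq[OF hat_minus_x_tendsto_0(2)[OF assms(1) \<open>\<xi> \<in> Xi\<close>]] w_lim \<open>\<xi> \<in> Xi\<close>
    by (intro tendsto_diff tendsto_scaleR tendsto_const) auto
  then have "(\<lambda>j. r *\<^sub>R (x (h j) \<xi> - xh (h j) \<xi>) - w (h j) \<xi> - F (wh (h j) \<xi>) \<xi>)
      \<longlonglongrightarrow> - F (xb \<xi>) \<xi> - wb \<xi>"
    by (simp add: minus_diff_commute[of "wb \<xi>"])
  then show "- F (xb \<xi>) \<xi> - wb \<xi> \<in> normal_cone (C \<xi>) (xb \<xi>)"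
    using C_closed hat_incl \<open>\<xi> \<in> Xi\<close> by (intro normal_cone_closed_graph[OF _ _ wh_lim]) auto
qed

lemma iterates_converge:
  assumes "ext_solution xs0 ws0"
  shows "\<exists>xs ws. (\<forall>\<xi>\<in>Xi. (\<lambda>k. x k \<xi>) \<longlonglongrightarrow> xs \<xi> \<and> (\<lambda>k. w k \<xi>) \<longlonglongrightarrow> ws \<xi>)
    \<and> ext_solution xs ws"
proof -
  obtain h where h: "strict_mono h"
    and "\<forall>\<xi>\<in>Xi. \<exists>l. ((\<lambda>k. (x k \<xi>, w k \<xi>)) \<circ> h) \<longlonglongrightarrow> l"
    using common_convergent_subseq[OF finite_Xi, of "\<lambda>\<xi> k. (x k \<xi>, w k \<xi>)"]
      iterates_bounded[OF assms] by blast
  then obtain l where l: "\<forall>\<xi>\<in>Xi. ((\<lambda>k. (x k \<xi>, w k \<xi>)) \<circ> h) \<longlonglongrightarrow> l \<xi>"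
    by metis
  define xb where "xb \<xi> = (if \<xi> \<in> Xi then fst (l \<xi>) else 0)" for \<xi>
  define wb where "wb \<xi> = (if \<xi> \<in> Xi then snd (l \<xi>) else 0)" for \<xi>
  have xb_lim: "\<forall>\<xi>\<in>Xi. (\<lambda>j. x (h j) \<xi>) \<longlonglongrightarrow> xb \<xi>"
    using l tendsto_fst unfolding xb_def by (fastforce simp: o_def)
  have wb_lim: "\<forall>\<xi>\<in>Xi. (\<lambda>j. w (h j) \<xi>) \<longlonglongrightarrow> wb \<xi>"
    using l tendsto_snd unfolding wb_def by (fastforce simp: o_def)
  have sol: "ext_solution xb wb"
    by (rule cluster_point_ext_solution[OF assms h _ _ xb_lim wb_lim]) (simp_all add: Ln_def xb_def wb_def)
  have "(sol_dist xb wb \<circ> h) \<longlonglongrightarrow> 0"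
  proof -
    have "(\<lambda>j. sqnorm (\<lambda>\<xi>. x (h j) \<xi> - xb \<xi>)) \<longlonglongrightarrow> 0" "(\<lambda>j. sqnorm (\<lambda>\<xi>. w (h j) \<xi> - wb \<xi>)) \<longlonglongrightarrow> 0"
      using xb_lim wb_lim by (auto intro!: sqnorm_tendsto_0 intro: LIM_zero)
    from tendsto_add[OF this(1) tendsto_divide_zero[OF this(2)]] show ?thesis
      unfolding sol_dist_def by (simp add: o_def)
  qed
  then have "sol_dist xb wb \<longlonglongrightarrow> 0"
    by (rule decseq_tendsto_0_if_subseq[OF sol_dist_decseq[OF sol] sol_dist_nonneg h])
  then show ?thesis
    using sol sol_dist_tendsto_0D by blast
qed

end

theorem corollary1:
  fixes Xi :: "(nat \<Rightarrow> 'c) set" and p :: "(nat \<Rightarrow> 'c) \<Rightarrow> real"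
    and N :: nat and blk :: "'n::finite \<Rightarrow> nat"
    and C :: "(nat \<Rightarrow> 'c) \<Rightarrow> (real^'n) set"
    and F :: "real^'n \<Rightarrow> (nat \<Rightarrow> 'c) \<Rightarrow> real^'n"
    and r :: real
    and x w xh wh :: "nat \<Rightarrow> (nat \<Rightarrow> 'c) \<Rightarrow> real^'n"
    and \<sigma>bar \<theta> :: real and \<sigma> \<tau> :: "nat \<Rightarrow> real"
  defines "PN \<equiv> oprojL Xi p (NA Xi blk)"
      and "PM \<equiv> oprojL Xi p (MA Xi p blk)"
  assumes Xi: "finite Xi" "Xi \<noteq> {}"
      and p: "\<forall>\<xi>\<in>Xi. p \<xi> > 0"
      and blk: "\<forall>i. blk i \<in> {1..N}"
      and C: "\<forall>\<xi>\<in>Xi. C \<xi> \<noteq> {} \<and> closed (C \<xi>) \<and> convex (C \<xi>)"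
      and F: "\<forall>\<xi>\<in>Xi. continuous_on UNIV (\<lambda>u. F u \<xi>)
                 \<and> (\<forall>u v. (F u \<xi> - F v \<xi>) \<bullet> (u - v) \<ge> 0)"
      and r: "r > 0"
      and ext_sol: "\<exists>xs\<in>NA Xi blk. \<exists>ws\<in>MA Xi p blk.
                 \<forall>\<xi>\<in>Xi. - F (xs \<xi>) \<xi> - ws \<xi> \<in> normal_cone (C \<xi>) (xs \<xi>)"
      and x0: "x 0 \<in> NA Xi blk" and w0: "w 0 \<in> MA Xi p blk"
      and \<sigma>bar: "0 < \<sigma>bar" "\<sigma>bar < 1"
      and \<theta>: "0 < \<theta>" "\<theta> < 1"
      and \<sigma>: "\<forall>k. 0 \<le> \<sigma> k \<and> \<sigma> k < \<sigma>bar"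
      and hat_L: "\<forall>k. xh k \<in> Ln Xi \<and> wh k \<in> Ln Xi"
      and hat_incl: "\<forall>k. \<forall>\<xi>\<in>Xi.
                 r *\<^sub>R (x k \<xi> - xh k \<xi>) - w k \<xi> - F (wh k \<xi>) \<xi>
                   \<in> normal_cone (C \<xi>) (wh k \<xi>)"
      and inexact: "\<forall>k. ipL Xi p (\<lambda>\<xi>. wh k \<xi> - xh k \<xi>) (\<lambda>\<xi>. wh k \<xi> - xh k \<xi>)
                 \<le> (\<sigma> k)\<^sup>2 *
                   (ipL Xi p (\<lambda>\<xi>. x k \<xi> - PN (xh k) \<xi> + PM (wh k) \<xi>)
                             (\<lambda>\<xi>. x k \<xi> - PN (xh k) \<xi> + PM (wh k) \<xi>)
                  + ipL Xi p (\<lambda>\<xi>. x k \<xi> - PN (wh k) \<xi> + PM (xh k) \<xi>)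
                             (\<lambda>\<xi>. x k \<xi> - PN (wh k) \<xi> + PM (xh k) \<xi>))"
      and nostop: "\<forall>k. \<exists>\<xi>\<in>Xi. x k \<xi> - PN (wh k) \<xi> + PM (xh k) \<xi> \<noteq> 0"
      and \<tau>: "\<forall>k. 1 - \<theta> \<le> \<tau> k \<and> \<tau> k \<le> 1 + \<theta>"
      and upd_x: "\<forall>k. x (Suc k) = (\<lambda>\<xi>. x k \<xi> - (\<tau> k *
                 (ipL Xi p (\<lambda>\<xi>. x k \<xi> - PN (xh k) \<xi> + PM (wh k) \<xi>)
                           (\<lambda>\<xi>. x k \<xi> - PN (wh k) \<xi> + PM (xh k) \<xi>)
                  / ipL Xi p (\<lambda>\<xi>. x k \<xi> - PN (xh k) \<xi> + PM (wh k) \<xi>)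
                             (\<lambda>\<xi>. x k \<xi> - PN (xh k) \<xi> + PM (wh k) \<xi>)))
                 *\<^sub>R (x k \<xi> - PN (xh k) \<xi>))"
      and upd_w: "\<forall>k. w (Suc k) = (\<lambda>\<xi>. w k \<xi> + (\<tau> k *
                 (ipL Xi p (\<lambda>\<xi>. x k \<xi> - PN (xh k) \<xi> + PM (wh k) \<xi>)
                           (\<lambda>\<xi>. x k \<xi> - PN (wh k) \<xi> + PM (xh k) \<xi>)
                  / ipL Xi p (\<lambda>\<xi>. x k \<xi> - PN (xh k) \<xi> + PM (wh k) \<xi>)
                             (\<lambda>\<xi>. x k \<xi> - PN (xh k) \<xi> + PM (wh k) \<xi>)) * r)
                 *\<^sub>R PM (wh k) \<xi>)"
  shows "\<exists>xs ws. (\<forall>\<xi>\<in>Xi. (\<lambda>k. x k \<xi>) \<longlonglongrightarrow> xs \<xi> \<and> (\<lambda>k. w k \<xi>) \<longlonglongrightarrow> ws \<xi>)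
           \<and> xs \<in> NA Xi blk \<and> ws \<in> MA Xi p blk
           \<and> (\<forall>\<xi>\<in>Xi. - F (xs \<xi>) \<xi> - ws \<xi> \<in> normal_cone (C \<xi>) (xs \<xi>))
           \<and> xs \<in> CC Xi C \<inter> NA Xi blk
           \<and> (\<lambda>\<xi>. - F (xs \<xi>) \<xi>) \<in> normal_coneL Xi p (CC Xi C \<inter> NA Xi blk) xs"
proof -
  interpret ipha Xi p blk C F r x w xh wh \<sigma>bar \<theta> \<sigma> \<tau>
    using Xi(1) p C F r x0 w0 \<sigma>bar(2) \<theta> \<sigma> \<tau> hat_L hat_incl inexact nostop upd_x upd_w
    unfolding PN_def PM_def by unfold_locales auto
  obtain xs0 ws0 where "ext_solution xs0 ws0"
    using ext_sol unfolding ext_solution_def by blast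
  then obtain xs ws where "\<forall>\<xi>\<in>Xi. (\<lambda>k. x k \<xi>) \<longlonglongrightarrow> xs \<xi> \<and> (\<lambda>k. w k \<xi>) \<longlonglongrightarrow> ws \<xi>"
    and sol: "xs \<in> NA Xi blk" "ws \<in> MA Xi p blk"
      "\<forall>\<xi>\<in>Xi. - F (xs \<xi>) \<xi> - ws \<xi> \<in> normal_cone (C \<xi>) (xs \<xi>)"
    using iterates_converge unfolding ext_solution_def by blast
  moreover have "(\<lambda>\<xi>. - F (xs \<xi>) \<xi>) \<in> normal_coneL Xi p (CC Xi C \<inter> NA Xi blk) xs"
    using sol by (rule normal_coneL_of_extensive)
  ultimately show ?thesis
    unfolding normal_coneL_def by blast
qed

end
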